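(* Let $n\ge 1$ and $k\ge 0$ be integers, let $G_n$ be the disjoint union of $n$ copies of the one-way infinite ladder, and let $M_n$ be the algebraic cycle matroid of $G_n$. Then $\mathrm{Spec}(M_n[k])=\{k,k+1,\dots,k+n\}$.
   Context: The one-way infinite ladder is the graph with vertices $u_i,w_i$ ($i\ge 1$) and edges $u_iu_{i+1}$, $w_iw_{i+1}$ and $u_iw_i$ for all $i\ge1$. For a graph $G$, an algebraic cycle is a nonempty edge set $A$ such that every vertex has even degree in the subgraph $(V(G),A)$; the algebraic cycle matroid of $G_n$ has ground set $E(G_n)$ and as independent sets the edge sets containing no algebraic cycle (this is a matroid for $G_n$). Matroids are in the sense of: $\emptyset$ independent; subsets of independent sets independent; if $B$ is maximal independent and $A$ is non-maximal independent then $A\cup\{b\}$ is independent for some $b\in B\setminus A$; for independent $A\subseteq X\subseteq E$ there is a maximal independent $S$ with $A\subseteq S\subseteq X$. Bases are maximal independent sets; the rank is the cardinality of a base (all infinite cardinalities identified). For a matroid $M=(E,\mathcal{L})$ of rank at least $k$, $M[k]=(E,\mathcal{L}[k])$ where $\mathcal{L}[k]=\{S\in\mathcal{L}: \exists T\in\mathcal{L},\ T\supseteq S,\ |T\setminus S|=k\}$; this is a matroid. The finitarization $M^{\mathrm{fin}}$ has as independent sets all sets whose finite subsets are all independent in $M$. $\mathrm{Spec}(M)=\{|F\setminus B|: B\subseteq F,\ F\text{ a base of }M^{\mathrm{fin}},\ B\text{ a base of }M\}$, with all infinite cardinalities identified with a single value $\infty$. *)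

theory Defs
  imports Main "HOL-Library.Extended_Nat"
begin

definition is_base :: "('a set \<Rightarrow> bool) \<Rightarrow> 'a set \<Rightarrow> bool" where
  "is_base I B \<longleftrightarrow> I B \<and> (\<forall>X. I X \<longrightarrow> B \<subseteq> X \<longrightarrow> X = B)"

definition trunc_indep :: "('a set \<Rightarrow> bool) \<Rightarrow> nat \<Rightarrow> 'a set \<Rightarrow> bool" where
  "trunc_indep I k S \<longleftrightarrow> I S \<and> (\<exists>T. I T \<and> S \<subseteq> T \<and> finite (T - S) \<and> card (T - S) = k)"

definition fin_indep :: "('a set \<Rightarrow> bool) \<Rightarrow> 'a set \<Rightarrow> bool" where
  "fin_indep I S \<longleftrightarrow> (\<forall>F. F \<subseteq> S \<longrightarrow> finite F \<longrightarrow> I F)"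

definition ecard :: "'a set \<Rightarrow> enat" where
  "ecard X = (if finite X then enat (card X) else \<infinity>)"

definition Spec :: "('a set \<Rightarrow> bool) \<Rightarrow> enat set" where
  "Spec I = {ecard (F - B) | F B. B \<subseteq> F \<and> is_base (fin_indep I) F \<and> is_base I B}"

datatype side = SideU | SideW
datatype ekind = RailU | RailW | Rung

text \<open>Vertex (j, i, s): copy j < n, position i (0-based, i.e. u_{i+1} / w_{i+1}), side s.
  Edge (j, i, RailU) = u_i u_{i+1}, (j, i, RailW) = w_i w_{i+1}, (j, i, Rung) = u_i w_i.\<close>
type_synonym lvertex = "nat \<times> nat \<times> side"
type_synonym ledge = "nat \<times> nat \<times> ekind"

fun ends :: "ledge \<Rightarrow> lvertex set" where
  "ends (j, i, RailU) = {(j, i, SideU), (j, Suc i, SideU)}"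
| "ends (j, i, RailW) = {(j, i, SideW), (j, Suc i, SideW)}"
| "ends (j, i, Rung) = {(j, i, SideU), (j, i, SideW)}"

definition ladder_verts :: "nat \<Rightarrow> lvertex set" where
  "ladder_verts n = {(j, i, s). j < n}"

definition ladder_edges :: "nat \<Rightarrow> ledge set" where
  "ladder_edges n = {(j, i, t). j < n}"

definition alg_cycle :: "nat \<Rightarrow> ledge set \<Rightarrow> bool" where
  "alg_cycle n A \<longleftrightarrow> A \<noteq> {} \<and> A \<subseteq> ladder_edges n \<and>
     (\<forall>v \<in> ladder_verts n. even (card {e \<in> A. v \<in> ends e}))"

definition acm_indep :: "nat \<Rightarrow> ledge set \<Rightarrow> bool" where
  "acm_indep n A \<longleftrightarrow> A \<subseteq> ladder_edges n \<and> \<not> (\<exists>C \<subseteq> A. alg_cycle n C)"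

end

(*
  The finitarization of M_n[k] equals that of M_n, so the bases F in the spectrum
  are the maximal edge sets without finite algebraic cycles. Algebraic cycles are closed under
  symmetric difference, so the usual exchange along finite fundamental cycles lets us move any
  independent extension of a base S of M_n[k] into F - S; this gives |F - S| >= k. A cycle
  inside such an F contains all rails of its ladder from some level on (else cutting it there
  leaves a finite cycle), hence each ladder carries at most one cycle of F, and deleting one
  element of each of these n cycles from k + n + 1 elements of F - S would extend S by k + 1,
  so |F - S| <= k + n. Conversely, for d <= n let F consist of a double ray (both rails joined
  by the first rung) on d ladders and a comb (one rail and all rungs) on the others, and let S
  be F minus the d first rungs and k rail edges of ladder 0; then |F - S| = d + k.
*)

theory Submission
  imports Defs
begin

lemma is_base_trunc_indep_iff:
  assumes down_closed: "\<And>A B. I B \<Longrightarrow> A \<subseteq> B \<Longrightarrow> I A"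
  shows "is_base (trunc_indep I k) S \<longleftrightarrow>
    trunc_indep I k S \<and> (\<forall>X. finite X \<longrightarrow> X \<inter> S = {} \<longrightarrow> card X = Suc k \<longrightarrow> \<not> I (S \<union> X))"
proof (intro iffI conjI allI impI notI)
  assume base: "is_base (trunc_indep I k) S"
  then show "trunc_indep I k S" by (simp add: is_base_def)
  fix X assume X: "finite X" "X \<inter> S = {}" "card X = Suc k" and indep: "I (S \<union> X)"
  obtain x where x: "x \<in> X" using X(3) by (metis card.empty ex_in_conv nat.distinct(1))
  have "trunc_indep I k (insert x S)"
    unfolding trunc_indep_def
  proof (intro conjI exI)
    show "I (insert x S)" using down_closed[OF indep] x by blast
    show "I (S \<union> X)" "insert x S \<subseteq> S \<union> X" using indep x by auto
    have "S \<union> X - insert x S = X - {x}" using X(2) by blast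
    then show "finite (S \<union> X - insert x S)" "card (S \<union> X - insert x S) = k" using X x by auto
  qed
  then show False using base x X(2) unfolding is_base_def by blast
next
  assume "trunc_indep I k S \<and> (\<forall>X. finite X \<longrightarrow> X \<inter> S = {} \<longrightarrow> card X = Suc k \<longrightarrow> \<not> I (S \<union> X))"
  then have trunc: "trunc_indep I k S"
    and no_ext: "\<forall>X. finite X \<longrightarrow> X \<inter> S = {} \<longrightarrow> card X = Suc k \<longrightarrow> \<not> I (S \<union> X)"
    by blast+
  show "is_base (trunc_indep I k) S"
    unfolding is_base_def
  proof (intro conjI allI impI trunc)
    fix S' assume S': "trunc_indep I k S'" "S \<subseteq> S'"
    then obtain T where T: "I T" "S' \<subseteq> T" "finite (T - S')" "card (T - S') = k"
      unfolding trunc_indep_def by blast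
    show "S' = S"
    proof (rule ccontr)
      assume "S' \<noteq> S"
      then obtain x where x: "x \<in> S'" "x \<notin> S" using S'(2) by blast
      have "I (S \<union> insert x (T - S'))"
        by (rule down_closed[OF T(1)]) (use S'(2) T(2) x in blast)
      moreover have "insert x (T - S') \<inter> S = {}" using S'(2) x by blast
      ultimately show False using no_ext[rule_format, of "insert x (T - S')"] T x by simp
    qed
  qed
qed

lemma fin_indep_trunc_indep:
  assumes "\<And>A. finite A \<Longrightarrow> I A \<Longrightarrow> trunc_indep I k A"
  shows "fin_indep (trunc_indep I k) = fin_indep I"
  using assms unfolding fin_indep_def trunc_indep_def by blast

(* cyc ranges over all, not necessarily minimal, cycles; closure under symmetric difference
   takes the place of circuit elimination. *)
locale cycle_space =
  fixes E :: "'a set" and cyc :: "'a set \<Rightarrow> bool" and indep :: "'a set \<Rightarrow> bool"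
  assumes cycle_subset: "cyc C \<Longrightarrow> C \<subseteq> E"
    and cycle_sym_diff: "cyc A \<Longrightarrow> cyc B \<Longrightarrow> A \<noteq> B \<Longrightarrow> cyc (sym_diff A B)"
    and indep_iff: "indep A \<longleftrightarrow> A \<subseteq> E \<and> \<not> (\<exists>C \<subseteq> A. cyc C)"
begin

lemma indep_subset: "indep B \<Longrightarrow> A \<subseteq> B \<Longrightarrow> indep A"
  unfolding indep_iff by blast

lemma fin_indep_iff: "fin_indep indep F \<longleftrightarrow> F \<subseteq> E \<and> (\<forall>C \<subseteq> F. finite C \<longrightarrow> \<not> cyc C)"
proof
  assume fin: "fin_indep indep F"
  have "{e} \<subseteq> E" if "e \<in> F" for e
    using fin that unfolding fin_indep_def indep_iff by blast
  moreover have "\<not> cyc C" if "C \<subseteq> F" "finite C" for C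
    using fin that unfolding fin_indep_def indep_iff by blast
  ultimately show "F \<subseteq> E \<and> (\<forall>C \<subseteq> F. finite C \<longrightarrow> \<not> cyc C)" by blast
next
  assume "F \<subseteq> E \<and> (\<forall>C \<subseteq> F. finite C \<longrightarrow> \<not> cyc C)"
  then show "fin_indep indep F"
    unfolding fin_indep_def indep_iff by (meson finite_subset subset_trans)
qed

lemma is_base_fin_indep_iff:
  "is_base (fin_indep indep) F \<longleftrightarrow>
    fin_indep indep F \<and> (\<forall>x \<in> E - F. \<exists>C. finite C \<and> cyc C \<and> C \<subseteq> insert x F)"
proof
  assume base: "is_base (fin_indep indep) F"
  then have fin: "fin_indep indep F" by (simp add: is_base_def)
  moreover have "\<exists>C. finite C \<and> cyc C \<and> C \<subseteq> insert x F" if x: "x \<in> E - F" for x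
  proof (rule ccontr)
    assume "\<nexists>C. finite C \<and> cyc C \<and> C \<subseteq> insert x F"
    then have "fin_indep indep (insert x F)" using fin x unfolding fin_indep_iff by blast
    then show False using base x unfolding is_base_def by blast
  qed
  ultimately show "fin_indep indep F \<and> (\<forall>x \<in> E - F. \<exists>C. finite C \<and> cyc C \<and> C \<subseteq> insert x F)"
    by blast
next
  assume "fin_indep indep F \<and> (\<forall>x \<in> E - F. \<exists>C. finite C \<and> cyc C \<and> C \<subseteq> insert x F)"
  then have fin: "fin_indep indep F"
    and fundamental: "\<And>x. x \<in> E - F \<Longrightarrow> \<exists>C. finite C \<and> cyc C \<and> C \<subseteq> insert x F"
    by blast+
  show "is_base (fin_indep indep) F"
    unfolding is_base_def
  proof (intro conjI allI impI fin)
    fix F' assume F': "fin_indep indep F'" "F \<subseteq> F'"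
    show "F' = F"
    proof (rule ccontr)
      assume "F' \<noteq> F"
      then obtain x where x: "x \<in> F'" "x \<notin> F" using F'(2) by blast
      then have "x \<in> E" using F'(1) unfolding fin_indep_iff by blast
      then obtain C where "finite C" "cyc C" "C \<subseteq> insert x F" using fundamental x by blast
      then show False using F' x unfolding fin_indep_iff by blast
    qed
  qed
qed

lemma cycle_elimination:
  assumes "finite Q"
    and "\<forall>z \<in> Q. \<exists>A. cyc A \<and> z \<in> A \<and> A \<subseteq> insert z Y"
    and "x \<notin> Y" "x \<notin> Q" "cyc G" "x \<in> G" "G \<subseteq> insert x (Y \<union> Q)"
  shows "\<exists>G'. cyc G' \<and> G' \<subseteq> insert x Y"
  using assms
proof (induction Q arbitrary: G rule: finite_induct)
  case empty
  then show ?case by auto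
next
  case (insert f Q)
  have spanned: "\<forall>z \<in> Q. \<exists>A. cyc A \<and> z \<in> A \<and> A \<subseteq> insert z Y"
    and "x \<notin> Q" using insert.prems(1,3) by blast+
  note IH = insert.IH[OF spanned insert.prems(2) \<open>x \<notin> Q\<close>]
  show ?case
  proof (cases "f \<in> G")
    case False
    show ?thesis by (rule IH[OF insert.prems(4,5)]) (use False insert.prems(6) in blast)
  next
    case True
    obtain A where A: "cyc A" "f \<in> A" "A \<subseteq> insert f Y" using insert.prems(1) by blast
    have "x \<notin> A" using A(3) insert.prems(2,3) by blast
    then have "cyc (sym_diff G A)"
      using cycle_sym_diff[OF insert.prems(4) A(1)] insert.prems(5) by blast
    moreover have "x \<in> sym_diff G A" using \<open>x \<notin> A\<close> insert.prems(5) by blast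
    moreover have "sym_diff G A \<subseteq> insert x (Y \<union> Q)" using insert.prems(6) A True by blast
    ultimately show ?thesis by (rule IH)
  qed
qed

(* x closes a finite fundamental cycle C with F; if no element of C - insert x Y could replace x,
   eliminating those elements one by one would leave a cycle inside insert x Y. *)
lemma exchange_step:
  assumes F: "is_base (fin_indep indep) F" and "x \<notin> F" "x \<notin> Y" "indep (insert x Y)"
  shows "\<exists>f \<in> F - insert x Y. indep (insert f Y)"
proof (rule ccontr)
  assume none: "\<not> ?thesis"
  have Y: "indep Y" using indep_subset assms(4) by blast
  have "x \<in> E" using assms(4) unfolding indep_iff by blast
  then obtain C where C: "finite C" "cyc C" "C \<subseteq> insert x F"
    using F assms(2) unfolding is_base_fin_indep_iff by blast
  have "x \<in> C" using C F unfolding is_base_fin_indep_iff fin_indep_iff by blast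
  have "\<forall>f \<in> C - insert x Y. \<exists>A. cyc A \<and> f \<in> A \<and> A \<subseteq> insert f Y"
  proof
    fix f assume f: "f \<in> C - insert x Y"
    have "f \<in> F" "f \<in> E" using f C cycle_subset by blast+
    then have "\<not> indep (insert f Y)" using none f by blast
    then obtain A where A: "cyc A" "A \<subseteq> insert f Y" using Y \<open>f \<in> E\<close> unfolding indep_iff by blast
    then have "f \<in> A" using Y unfolding indep_iff by blast
    then show "\<exists>A. cyc A \<and> f \<in> A \<and> A \<subseteq> insert f Y" using A by blast
  qed
  then obtain G where "cyc G" "G \<subseteq> insert x Y"
    using cycle_elimination[of "C - insert x Y" Y x C] C \<open>x \<in> C\<close> assms(3) by blast
  then show False using assms(4) unfolding indep_iff by blast
qed

lemma exchange_into_base: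
  assumes F: "is_base (fin_indep indep) F" and "S \<subseteq> F"
  shows "finite X \<Longrightarrow> X \<inter> S = {} \<Longrightarrow> indep (S \<union> X) \<Longrightarrow>
    \<exists>X' \<subseteq> F - S. finite X' \<and> card X' = card X \<and> indep (S \<union> X')"
proof (induction "card (X - F)" arbitrary: X rule: less_induct)
  case less
  show ?case
  proof (cases "X \<subseteq> F")
    case True
    then show ?thesis using less.prems by blast
  next
    case False
    then obtain x where x: "x \<in> X" "x \<notin> F" by blast
    define Y where "Y = S \<union> X - {x}"
    have "x \<notin> Y" "insert x Y = S \<union> X" using x less.prems(2) unfolding Y_def by blast+
    then obtain f where f: "f \<in> F - (S \<union> X)" "indep (insert f Y)"
      using exchange_step[OF F x(2), of Y] less.prems(3) by auto
    define X1 where "X1 = insert f (X - {x})"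
    have "S \<union> X1 = insert f Y" "X1 \<inter> S = {}"
      using less.prems(2) x f(1) unfolding X1_def Y_def by blast+
    moreover have "card (X1 - F) < card (X - F)"
    proof -
      have "X1 - F = (X - F) - {x}" using f(1) unfolding X1_def by blast
      then show ?thesis using x less.prems(1) card_Diff1_less[of "X - F" x] by simp
    qed
    moreover have "finite X1" "card X1 = card X"
      using f(1) x(1) less.prems(1) card_gt_0_iff[of X] unfolding X1_def by auto
    ultimately show ?thesis using less.hyps[of X1] f(2) by metis
  qed
qed

lemma ecard_diff_base_ge:
  assumes F: "is_base (fin_indep indep) F" and S: "is_base (trunc_indep indep k) S" and "S \<subseteq> F"
  shows "enat k \<le> ecard (F - S)"
proof -
  obtain T where T: "indep T" "S \<subseteq> T" "finite (T - S)" "card (T - S) = k"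
    using S unfolding is_base_def trunc_indep_def by blast
  have "S \<union> (T - S) = T" using T(2) by blast
  then obtain X where "X \<subseteq> F - S" "finite X" "card X = k"
    using exchange_into_base[OF F \<open>S \<subseteq> F\<close> T(3)] T by auto
  then show ?thesis unfolding ecard_def by (auto intro: card_mono)
qed

lemma is_base_trunc_iff:
  "is_base (trunc_indep indep k) S \<longleftrightarrow>
    trunc_indep indep k S \<and> (\<forall>X. finite X \<longrightarrow> X \<inter> S = {} \<longrightarrow> card X = Suc k \<longrightarrow> \<not> indep (S \<union> X))"
  by (rule is_base_trunc_indep_iff) (fact indep_subset)

(* From k + m + 1 elements of F - S delete one element of each member of \<C> lying in their
   union with S; the at least k + 1 remaining elements extend S independently. *)
lemma ecard_diff_base_le:
  assumes S: "is_base (trunc_indep indep k) S" and "S \<subseteq> F" "F \<subseteq> E"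
    and "finite \<C>" "card \<C> \<le> m" "\<forall>C \<in> \<C>. cyc C"
    and covers: "\<And>A. cyc A \<Longrightarrow> A \<subseteq> F \<Longrightarrow> \<exists>C \<in> \<C>. C \<subseteq> A"
  shows "ecard (F - S) \<le> enat (k + m)"
proof (rule ccontr)
  assume too_large: "\<not> ?thesis"
  obtain Z where Z: "Z \<subseteq> F - S" "finite Z" "card Z = k + m + 1"
  proof (cases "finite (F - S)")
    case True
    then have "k + m + 1 \<le> card (F - S)" using too_large unfolding ecard_def by simp
    then show ?thesis using that obtain_subset_with_card_n by metis
  next
    case False
    then show ?thesis using that infinite_arbitrarily_large by metis
  qed
  have S_indep: "indep S" using S unfolding is_base_def trunc_indep_def by blast
  have "\<exists>z. z \<in> Z \<inter> C" if "C \<in> \<C>" "C \<subseteq> S \<union> Z" for C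
    using that S_indep \<open>\<forall>C \<in> \<C>. cyc C\<close> unfolding indep_iff by blast
  then obtain pick where pick: "\<And>C. C \<in> \<C> \<Longrightarrow> C \<subseteq> S \<union> Z \<Longrightarrow> pick C \<in> Z \<inter> C" by metis
  define Z' where "Z' = Z - pick ` \<C>"
  have "card (pick ` \<C>) \<le> m" using card_image_le[OF \<open>finite \<C>\<close>] \<open>card \<C> \<le> m\<close> by (rule le_trans)
  then have "Suc k \<le> card Z'"
    using diff_card_le_card_Diff[of "pick ` \<C>" Z] \<open>finite \<C>\<close> Z(3) unfolding Z'_def by simp
  then obtain X where X: "X \<subseteq> Z'" "card X = Suc k" by (meson obtain_subset_with_card_n)
  then have "finite X" using Z(2) finite_subset unfolding Z'_def by blast
  have "indep (S \<union> Z')"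
    unfolding indep_iff
  proof (intro conjI notI)
    show "S \<union> Z' \<subseteq> E" using Z(1) \<open>S \<subseteq> F\<close> \<open>F \<subseteq> E\<close> unfolding Z'_def by blast
  next
    assume "\<exists>A \<subseteq> S \<union> Z'. cyc A"
    then obtain A where A: "A \<subseteq> S \<union> Z'" "cyc A" by blast
    then obtain C where C: "C \<in> \<C>" "C \<subseteq> A"
      using covers Z(1) \<open>S \<subseteq> F\<close> unfolding Z'_def by blast
    then have "pick C \<in> Z \<inter> A" using pick A(1) unfolding Z'_def by blast
    then show False using A(1) C(1) Z(1) unfolding Z'_def by blast
  qed
  then have "indep (S \<union> X)" using X(1) indep_subset by blast
  moreover have "X \<inter> S = {}" using X(1) Z(1) unfolding Z'_def by blast
  ultimately show False using S X(2) \<open>finite X\<close> unfolding is_base_trunc_iff by blast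
qed

lemma is_base_trunc_indep_if_no_extension_in_base:
  assumes F: "is_base (fin_indep indep) F" and "S \<subseteq> F" "trunc_indep indep k S"
    and no_ext: "\<And>X. X \<subseteq> F - S \<Longrightarrow> card X = Suc k \<Longrightarrow> \<not> indep (S \<union> X)"
  shows "is_base (trunc_indep indep k) S"
proof -
  have "\<not> indep (S \<union> X)" if X: "finite X" "X \<inter> S = {}" "card X = Suc k" for X
  proof
    assume "indep (S \<union> X)"
    then obtain X' where "X' \<subseteq> F - S" "card X' = card X" "indep (S \<union> X')"
      using exchange_into_base[OF F \<open>S \<subseteq> F\<close> X(1,2)] by blast
    then show False using no_ext X(3) by simp
  qed
  then show ?thesis
    using \<open>trunc_indep indep k S\<close> unfolding is_base_trunc_iff by blast
qed

end

fun rail :: "side \<Rightarrow> ekind" where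
  "rail SideU = RailU"
| "rail SideW = RailW"

lemma mem_ends_iff:
  "(j, i, s) \<in> ends e \<longleftrightarrow> e = (j, i, rail s) \<or> e = (j, i, Rung) \<or> (0 < i \<and> e = (j, i - 1, rail s))"
  by (cases e rule: ends.cases; cases s) auto

definition even_at :: "ledge set \<Rightarrow> nat \<Rightarrow> nat \<Rightarrow> side \<Rightarrow> bool" where
  "even_at C j i s \<longleftrightarrow>
    (((j, i, rail s) \<in> C) \<noteq> ((j, i, Rung) \<in> C)) = (0 < i \<and> (j, i - 1, rail s) \<in> C)"

lemma card_Int_insert_parity:
  "finite A \<Longrightarrow> a \<notin> A \<Longrightarrow> even (card (C \<inter> insert a A)) \<longleftrightarrow> (a \<in> C) \<noteq> even (card (C \<inter> A))"
  by (auto simp: Int_insert_right)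

lemma even_degree_iff: "even (card {e \<in> C. (j, i, s) \<in> ends e}) \<longleftrightarrow> even_at C j i s"
proof -
  have rail_ne: "rail s \<noteq> Rung" by (cases s) auto
  show ?thesis
  proof (cases i)
    case 0
    then have "{e \<in> C. (j, i, s) \<in> ends e} = C \<inter> {(j, i, rail s), (j, i, Rung)}"
      unfolding mem_ends_iff by auto
    then show ?thesis using 0 rail_ne unfolding even_at_def by (simp add: card_Int_insert_parity)
  next
    case (Suc l)
    then have "{e \<in> C. (j, i, s) \<in> ends e} = C \<inter> {(j, i, rail s), (j, i, Rung), (j, l, rail s)}"
      unfolding mem_ends_iff by auto
    then show ?thesis using Suc rail_ne unfolding even_at_def by (auto simp: card_Int_insert_parity)
  qed
qed

lemma alg_cycle_iff:
  "alg_cycle n C \<longleftrightarrow> C \<noteq> {} \<and> C \<subseteq> ladder_edges n \<and> (\<forall>j i s. even_at C j i s)"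
proof -
  have "(\<forall>v \<in> ladder_verts n. even (card {e \<in> C. v \<in> ends e})) \<longleftrightarrow> (\<forall>j<n. \<forall>i s. even_at C j i s)"
    by (auto simp: ladder_verts_def even_degree_iff)
  moreover have "even_at C j i s" if "C \<subseteq> ladder_edges n" "\<not> j < n" for j i s
    using that unfolding even_at_def ladder_edges_def by auto
  ultimately show ?thesis
    unfolding alg_cycle_def by (meson not_less)
qed

lemma even_at_sym_diff: "even_at A j i s \<Longrightarrow> even_at B j i s \<Longrightarrow> even_at (sym_diff A B) j i s"
  unfolding even_at_def by auto

lemma alg_cycle_sym_diff:
  assumes "alg_cycle n A" "alg_cycle n B" "A \<noteq> B"
  shows "alg_cycle n (sym_diff A B)"
proof -
  have "even_at (sym_diff A B) j i s" for j i s
    using assms even_at_sym_diff unfolding alg_cycle_iff by blast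
  moreover have "sym_diff A B \<noteq> {}" "sym_diff A B \<subseteq> ladder_edges n"
    using assms unfolding alg_cycle_def by blast+
  ultimately show ?thesis by (simp add: alg_cycle_iff)
qed

interpretation acm: cycle_space "ladder_edges n" "alg_cycle n" "acm_indep n" for n
proof
  show "alg_cycle n C \<Longrightarrow> C \<subseteq> ladder_edges n" for C by (simp add: alg_cycle_def)
qed (simp_all add: alg_cycle_sym_diff acm_indep_def)

definition ladder :: "nat \<Rightarrow> ledge set" where
  "ladder j = {j} \<times> UNIV"

definition ladder_prefix :: "nat \<Rightarrow> nat \<Rightarrow> ledge set" where
  "ladder_prefix j N = {j} \<times> {..N} \<times> UNIV"

lemma mem_ladder [simp]: "(j', i, t) \<in> ladder j \<longleftrightarrow> j' = j"
  by (simp add: ladder_def)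

lemma mem_ladder_prefix [simp]: "(j', i, t) \<in> ladder_prefix j N \<longleftrightarrow> j' = j \<and> i \<le> N"
  by (simp add: ladder_prefix_def)

lemma finite_ladder_prefix: "finite (ladder_prefix j N)"
proof -
  have "(UNIV :: ekind set) = {RailU, RailW, Rung}" using ekind.exhaust by auto
  then have "finite (UNIV :: ekind set)" by (metis finite.emptyI finite_insert)
  then show ?thesis unfolding ladder_prefix_def by (intro finite_cartesian_product) auto
qed

lemma alg_cycle_Int_ladder:
  assumes "alg_cycle n C" "C \<inter> ladder j \<noteq> {}"
  shows "alg_cycle n (C \<inter> ladder j)"
proof -
  have "even_at (C \<inter> ladder j) j' i s" for j' i s
  proof -
    have "even_at C j' i s" using assms(1) unfolding alg_cycle_iff by blast
    then show ?thesis unfolding even_at_def by (cases "j' = j") auto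
  qed
  then show ?thesis using assms unfolding alg_cycle_iff by blast
qed

lemma alg_cycle_rails_paired:
  assumes "alg_cycle n C"
  shows "(j, i, RailU) \<in> C \<longleftrightarrow> (j, i, RailW) \<in> C"
proof -
  have U: "even_at C j l SideU" and W: "even_at C j l SideW" for l
    using assms unfolding alg_cycle_iff by blast+
  show ?thesis
  proof (induction i)
    case 0
    then show ?case using U[of 0] W[of 0] unfolding even_at_def by simp
  next
    case (Suc i)
    then show ?case using U[of "Suc i"] W[of "Suc i"] unfolding even_at_def by auto
  qed
qed

lemma alg_cycle_Int_ladder_prefix:
  assumes "alg_cycle n C" "(j, N, RailU) \<notin> C" "C \<inter> ladder_prefix j N \<noteq> {}"
  shows "alg_cycle n (C \<inter> ladder_prefix j N)"
proof -
  have no_rails: "(j, N, rail s) \<notin> C" for s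
    using assms(2) alg_cycle_rails_paired[OF assms(1)] by (cases s) auto
  have "even_at (C \<inter> ladder_prefix j N) j' i s" for j' i s
  proof -
    have "even_at C j' i s" using assms(1) unfolding alg_cycle_iff by blast
    then show ?thesis
      using no_rails[of s] unfolding even_at_def
      by (cases "j' = j"; cases "i \<le> N"; cases "i = Suc N") auto
  qed
  then show ?thesis using assms unfolding alg_cycle_iff by blast
qed

(* Otherwise cutting C at a level where its rails are missing leaves a finite cycle inside F. *)
lemma alg_cycle_in_fin_indep_eventually_rails:
  assumes "fin_indep (acm_indep n) F" "alg_cycle n C" "C \<subseteq> F \<inter> ladder j"
  shows "\<exists>N\<^sub>0. \<forall>N \<ge> N\<^sub>0. (j, N, RailU) \<in> C"
proof -
  obtain e where "e \<in> C" using assms(2) unfolding alg_cycle_def by blast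
  then obtain i t where e: "(j, i, t) \<in> C" using assms(3) by (cases e) auto
  have "(j, N, RailU) \<in> C" if "i \<le> N" for N
  proof (rule ccontr)
    assume "(j, N, RailU) \<notin> C"
    moreover have "(j, i, t) \<in> C \<inter> ladder_prefix j N" using e that by simp
    ultimately have "alg_cycle n (C \<inter> ladder_prefix j N)"
      using alg_cycle_Int_ladder_prefix[OF assms(2)] by blast
    moreover have "finite (C \<inter> ladder_prefix j N)" "C \<inter> ladder_prefix j N \<subseteq> F"
      using finite_ladder_prefix assms(3) by auto
    ultimately show False using assms(1) unfolding acm.fin_indep_iff by blast
  qed
  then show ?thesis by blast
qed

lemma alg_cycle_in_fin_indep_unique:
  assumes F: "fin_indep (acm_indep n) F"
    and C: "alg_cycle n C" "C \<subseteq> F \<inter> ladder j" and C': "alg_cycle n C'" "C' \<subseteq> F \<inter> ladder j"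
  shows "C = C'"
proof (rule ccontr)
  assume "C \<noteq> C'"
  then have D: "alg_cycle n (sym_diff C C')" "sym_diff C C' \<subseteq> F \<inter> ladder j"
    using alg_cycle_sym_diff[OF C(1) C'(1)] C C' by blast+
  obtain N\<^sub>1 N\<^sub>2 N\<^sub>3 where rails:
      "\<forall>N \<ge> N\<^sub>1. (j, N, RailU) \<in> C" "\<forall>N \<ge> N\<^sub>2. (j, N, RailU) \<in> C'"
      "\<forall>N \<ge> N\<^sub>3. (j, N, RailU) \<in> sym_diff C C'"
    using alg_cycle_in_fin_indep_eventually_rails[OF F C] alg_cycle_in_fin_indep_eventually_rails[OF F C']
      alg_cycle_in_fin_indep_eventually_rails[OF F D] by blast
  define N where "N = max N\<^sub>1 (max N\<^sub>2 N\<^sub>3)"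
  have "N\<^sub>1 \<le> N" "N\<^sub>2 \<le> N" "N\<^sub>3 \<le> N" unfolding N_def by auto
  then have "(j, N, RailU) \<in> C" "(j, N, RailU) \<in> C'" "(j, N, RailU) \<in> sym_diff C C'"
    using rails by blast+
  then show False by blast
qed

lemma alg_cycle_rung_has_rail:
  assumes "alg_cycle n C" "(j, i, Rung) \<in> C"
  shows "(j, i, rail s) \<in> C \<or> (0 < i \<and> (j, i - 1, rail s) \<in> C)"
proof -
  have "even_at C j i s" using assms(1) unfolding alg_cycle_iff by blast
  then show ?thesis using assms(2) unfolding even_at_def by auto
qed

lemma alg_cycle_has_rung:
  assumes "alg_cycle n C" "(j, i, t) \<in> C"
  shows "\<exists>p. (j, p, Rung) \<in> C"
proof -
  define p where "p = (LEAST p. \<exists>t. (j, p, t) \<in> C)"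
  obtain t' where t': "(j, p, t') \<in> C"
    using LeastI[of "\<lambda>p. \<exists>t. (j, p, t) \<in> C" i] assms(2) unfolding p_def by blast
  show ?thesis
  proof (cases "t' = Rung")
    case True
    then show ?thesis using t' by blast
  next
    case False
    then obtain s where s: "t' = rail s" by (metis ekind.exhaust rail.simps)
    have "even_at C j p s" using assms(1) unfolding alg_cycle_iff by blast
    moreover have "(j, p - 1, rail s) \<notin> C" if "0 < p"
      using not_less_Least[of "p - 1" "\<lambda>p. \<exists>t. (j, p, t) \<in> C"] that unfolding p_def by auto
    ultimately show ?thesis using t' s unfolding even_at_def by auto
  qed
qed

lemma alg_cycle_has_RailW:
  assumes "alg_cycle n C" "(j, i, t) \<in> C"
  shows "\<exists>q. (j, q, RailW) \<in> C"
  using alg_cycle_has_rung[OF assms] alg_cycle_rung_has_rail[OF assms(1), of j _ SideW] by force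

lemma finite_alg_cycle_has_positive_rung:
  assumes "finite C" "alg_cycle n C" "(j, i, t) \<in> C"
  shows "\<exists>p > 0. (j, p, Rung) \<in> C"
proof -
  define levels where "levels = {i. \<exists>t. (j, i, t) \<in> C}"
  have "levels \<subseteq> (\<lambda>e. fst (snd e)) ` C" unfolding levels_def by force
  then have "finite levels" using assms(1) finite_surj by blast
  define p where "p = Max levels"
  have "i \<in> levels" using assms(3) unfolding levels_def by blast
  then obtain t' where t': "(j, p, t') \<in> C"
    using Max_in[OF \<open>finite levels\<close>] unfolding p_def levels_def by blast
  have above: "(j, Suc p, t'') \<notin> C" for t''
    using Max_ge[OF \<open>finite levels\<close>, of "Suc p"] unfolding p_def levels_def by auto
  have no_rail: "(j, p, rail s) \<notin> C" for s
  proof -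
    have "even_at C j (Suc p) s" using assms(2) unfolding alg_cycle_iff by blast
    then show ?thesis using above unfolding even_at_def by auto
  qed
  have "t' = Rung" using t' no_rail[of SideU] no_rail[of SideW] by (cases t') auto
  moreover have "0 < p"
    using alg_cycle_rung_has_rail[OF assms(2), of j p SideU] t' no_rail[of SideU] calculation by auto
  ultimately show ?thesis using t' by blast
qed

definition rectangle :: "nat \<Rightarrow> nat \<Rightarrow> nat \<Rightarrow> ledge set" where
  "rectangle j a b = {(j', i, t). j' = j \<and> (if t = Rung then i = a \<or> i = b else a \<le> i \<and> i < b)}"

lemma mem_rectangle [simp]:
  "(j', i, t) \<in> rectangle j a b \<longleftrightarrow> j' = j \<and> (if t = Rung then i = a \<or> i = b else a \<le> i \<and> i < b)"
  by (simp add: rectangle_def)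

lemma alg_cycle_rectangle:
  assumes "j < n" "a < b"
  shows "alg_cycle n (rectangle j a b)"
  unfolding alg_cycle_iff
proof (intro conjI allI)
  have "(j, a, Rung) \<in> rectangle j a b" by simp
  then show "rectangle j a b \<noteq> {}" by blast
  show "rectangle j a b \<subseteq> ladder_edges n" using assms(1) unfolding rectangle_def ladder_edges_def by auto
  fix j' i s
  have "rail s \<noteq> Rung" by (cases s) auto
  then show "even_at (rectangle j a b) j' i s"
    using assms(2) unfolding even_at_def by (cases "j' = j") auto
qed

lemma finite_rectangle: "finite (rectangle j a b)"
  by (rule finite_subset[OF _ finite_ladder_prefix[of j "max a b"]]) (auto simp: rectangle_def)

definition double_ray :: "nat \<Rightarrow> ledge set" where
  "double_ray j = {(j', i, t). j' = j \<and> (t = Rung \<longrightarrow> i = 0)}"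

lemma mem_double_ray [simp]: "(j', i, t) \<in> double_ray j \<longleftrightarrow> j' = j \<and> (t = Rung \<longrightarrow> i = 0)"
  by (simp add: double_ray_def)

lemma alg_cycle_double_ray:
  assumes "j < n"
  shows "alg_cycle n (double_ray j)"
  unfolding alg_cycle_iff
proof (intro conjI allI)
  have "(j, 0, Rung) \<in> double_ray j" by simp
  then show "double_ray j \<noteq> {}" by blast
  show "double_ray j \<subseteq> ladder_edges n" using assms unfolding double_ray_def ladder_edges_def by auto
  fix j' i s
  have "rail s \<noteq> Rung" by (cases s) auto
  then show "even_at (double_ray j) j' i s" unfolding even_at_def by (cases "j' = j") auto
qed

lemma ecard_diff_base_le_ladders:
  assumes F: "fin_indep (acm_indep n) F"
    and S: "is_base (trunc_indep (acm_indep n) k) S" "S \<subseteq> F"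
  shows "ecard (F - S) \<le> enat (k + n)"
proof -
  define ladder_cycles where "ladder_cycles = {C. alg_cycle n C \<and> (\<exists>j<n. C \<subseteq> F \<inter> ladder j)}"
  define cycle_in where "cycle_in j = (THE C. alg_cycle n C \<and> C \<subseteq> F \<inter> ladder j)" for j
  have sub: "ladder_cycles \<subseteq> cycle_in ` {..<n}"
  proof
    fix C assume "C \<in> ladder_cycles"
    then obtain j where j: "j < n" "alg_cycle n C" "C \<subseteq> F \<inter> ladder j"
      unfolding ladder_cycles_def by blast
    then have "cycle_in j = C"
      unfolding cycle_in_def using alg_cycle_in_fin_indep_unique[OF F] by (intro the_equality) blast+
    then show "C \<in> cycle_in ` {..<n}" using j(1) by blast
  qed
  have "finite (cycle_in ` {..<n})" by simp
  then have finite: "finite ladder_cycles" and card: "card ladder_cycles \<le> n"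
    using finite_subset[OF sub] card_mono[OF _ sub] card_image_le[of "{..<n}" cycle_in] by auto
  have covers: "\<exists>C \<in> ladder_cycles. C \<subseteq> A" if A: "alg_cycle n A" "A \<subseteq> F" for A
  proof -
    obtain e where "e \<in> A" using A(1) unfolding alg_cycle_def by blast
    then obtain j i t where e: "(j, i, t) \<in> A" by (cases e) auto
    then have "j < n" using A(1) unfolding alg_cycle_def ladder_edges_def by auto
    moreover have "alg_cycle n (A \<inter> ladder j)"
      by (rule alg_cycle_Int_ladder[OF A(1)]) (use e in \<open>metis IntI empty_iff mem_ladder\<close>)
    ultimately have "A \<inter> ladder j \<in> ladder_cycles" using A(2) unfolding ladder_cycles_def by blast
    then show ?thesis by blast
  qed
  have "F \<subseteq> ladder_edges n" using F unfolding acm.fin_indep_iff by blast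
  moreover have "\<forall>C \<in> ladder_cycles. alg_cycle n C" unfolding ladder_cycles_def by blast
  ultimately show ?thesis using acm.ecard_diff_base_le[OF S _ finite card _ covers] by blast
qed

(* Rungs placed above all edges of A lie on no cycle of A \<union> K. *)
lemma finite_acm_indep_trunc_indep:
  assumes "0 < n" "finite A" "acm_indep n A"
  shows "trunc_indep (acm_indep n) k A"
proof -
  obtain N where N: "\<And>j i t. (j, i, t) \<in> A \<Longrightarrow> i < N"
  proof -
    have "finite ((\<lambda>e. fst (snd e)) ` A)" using assms(2) by simp
    then obtain N where "(\<lambda>e. fst (snd e)) ` A \<subseteq> {..<N}" using finite_nat_bounded by blast
    then have "\<And>j i t. (j, i, t) \<in> A \<Longrightarrow> i < N" by force
    then show ?thesis by (rule that)
  qed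
  define K where "K = (\<lambda>l. (0 :: nat, N + Suc l, Rung)) ` {..<k}"
  have "acm_indep n (A \<union> K)"
    unfolding acm_indep_def
  proof (intro conjI notI)
    show "A \<union> K \<subseteq> ladder_edges n"
      using assms unfolding acm_indep_def K_def ladder_edges_def by auto
  next
    assume "\<exists>C \<subseteq> A \<union> K. alg_cycle n C"
    then obtain C where C: "C \<subseteq> A \<union> K" "alg_cycle n C" by blast
    show False
    proof (cases "C \<subseteq> A")
      case True
      then show False using assms(3) C(2) unfolding acm_indep_def by blast
    next
      case False
      then obtain l where "(0, N + Suc l, Rung) \<in> C" using C(1) unfolding K_def by blast
      from alg_cycle_rung_has_rail[OF C(2) this, of SideU]
      show False using C(1) N unfolding K_def by fastforce
    qed
  qed
  moreover have "A \<union> K - A = K" using N unfolding K_def by force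
  moreover have "finite K" "card K = k" unfolding K_def by (simp_all add: card_image inj_on_def)
  ultimately show ?thesis
    unfolding trunc_indep_def using assms(3) by (intro conjI exI[of _ "A \<union> K"]) auto
qed

lemma fin_indep_trunc_acm_indep:
  "0 < n \<Longrightarrow> fin_indep (trunc_indep (acm_indep n) k) = fin_indep (acm_indep n)"
  by (rule fin_indep_trunc_indep) (rule finite_acm_indep_trunc_indep)

definition max_forest :: "nat \<Rightarrow> nat \<Rightarrow> ledge set" where
  "max_forest n d = {(j, i, t). j < n \<and> (if j < d then t = Rung \<longrightarrow> i = 0 else t \<noteq> RailW)}"

lemma mem_max_forest [simp]:
  "(j, i, t) \<in> max_forest n d \<longleftrightarrow> j < n \<and> (if j < d then t = Rung \<longrightarrow> i = 0 else t \<noteq> RailW)"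
  by (simp add: max_forest_def)

lemma is_base_fin_max_forest: "is_base (fin_indep (acm_indep n)) (max_forest n d)"
  unfolding acm.is_base_fin_indep_iff acm.fin_indep_iff
proof (intro conjI ballI allI impI notI)
  show "max_forest n d \<subseteq> ladder_edges n" unfolding max_forest_def ladder_edges_def by auto
next
  fix C assume C: "C \<subseteq> max_forest n d" "finite C" "alg_cycle n C"
  obtain e where "e \<in> C" using C(3) unfolding alg_cycle_def by blast
  then obtain j i t where e: "(j, i, t) \<in> C" by (cases e) auto
  show False
  proof (cases "j < d")
    case True
    obtain p where "0 < p" "(j, p, Rung) \<in> C" using finite_alg_cycle_has_positive_rung[OF C(2,3) e] by blast
    then show False using C(1) True by fastforce
  next
    case False
    obtain q where "(j, q, RailW) \<in> C" using alg_cycle_has_RailW[OF C(3) e] by blast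
    then show False using C(1) False by fastforce
  qed
next
  fix x assume x: "x \<in> ladder_edges n - max_forest n d"
  then obtain j i t where x_eq: "x = (j, i, t)" and "j < n" by (cases x) (auto simp: ladder_edges_def)
  show "\<exists>C. finite C \<and> alg_cycle n C \<and> C \<subseteq> insert x (max_forest n d)"
  proof (cases t)
    case RailU
    then show ?thesis using x x_eq \<open>j < n\<close> by (auto split: if_splits)
  next
    case RailW
    then have "d \<le> j" using x x_eq \<open>j < n\<close> by (auto split: if_splits)
    then have "rectangle j i (Suc i) \<subseteq> insert x (max_forest n d)"
      using x_eq RailW \<open>j < n\<close> by auto
    then show ?thesis using alg_cycle_rectangle[OF \<open>j < n\<close>, of i "Suc i"] finite_rectangle by blast
  next
    case Rung
    then have "j < d" "0 < i" using x x_eq \<open>j < n\<close> by (auto split: if_splits)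
    then have "rectangle j 0 i \<subseteq> insert x (max_forest n d)"
      using x_eq Rung \<open>j < n\<close> by auto
    then show ?thesis using alg_cycle_rectangle[OF \<open>j < n\<close> \<open>0 < i\<close>] finite_rectangle by blast
  qed
qed

definition first_rungs :: "nat \<Rightarrow> ledge set" where
  "first_rungs d = (\<lambda>j. (j, 0, Rung)) ` {..<d}"

definition initial_rail :: "nat \<Rightarrow> ledge set" where
  "initial_rail k = (\<lambda>i. (0, i, RailU)) ` {..<k}"

lemma acm_indep_max_forest_minus_first_rungs:
  "acm_indep n (max_forest n d - first_rungs d)"
  unfolding acm_indep_def
proof (intro conjI notI)
  show "max_forest n d - first_rungs d \<subseteq> ladder_edges n"
    unfolding max_forest_def ladder_edges_def by auto
next
  assume "\<exists>C \<subseteq> max_forest n d - first_rungs d. alg_cycle n C"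
  then obtain C where C: "C \<subseteq> max_forest n d - first_rungs d" "alg_cycle n C" by blast
  obtain e where "e \<in> C" using C(2) unfolding alg_cycle_def by blast
  then obtain j i t where e: "(j, i, t) \<in> C" by (cases e) auto
  obtain p where "(j, p, Rung) \<in> C" using alg_cycle_has_rung[OF C(2) e] by blast
  then have "d \<le> j" using C(1) unfolding first_rungs_def by (auto split: if_splits)
  moreover obtain q where "(j, q, RailW) \<in> C" using alg_cycle_has_RailW[OF C(2) e] by blast
  ultimately show False using C(1) by auto
qed

lemma max_forest_diff:
  assumes "0 < n" "d \<le> n"
  shows "max_forest n d - (max_forest n d - first_rungs d - initial_rail k) = first_rungs d \<union> initial_rail k"
  using assms unfolding first_rungs_def initial_rail_def by auto

lemma finite_initial_rail: "finite (initial_rail k)"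
  by (simp add: initial_rail_def)

lemma card_initial_rail: "card (initial_rail k) = k"
  by (simp add: initial_rail_def card_image inj_on_def)

lemma trunc_indep_max_forest_minus:
  assumes "0 < n"
  shows "trunc_indep (acm_indep n) k (max_forest n d - first_rungs d - initial_rail k)"
proof -
  let ?B = "max_forest n d - first_rungs d"
  have "initial_rail k \<subseteq> ?B" using assms unfolding initial_rail_def first_rungs_def by auto
  then have "?B - (?B - initial_rail k) = initial_rail k" by blast
  then show ?thesis
    unfolding trunc_indep_def using acm_indep_max_forest_minus_first_rungs finite_initial_rail card_initial_rail
    by (intro conjI exI[of _ ?B]) (auto intro: acm.indep_subset)
qed

(* A first rung of a ladder j > 0 closes the double ray of that ladder, so X would have to be
   initial_rail k together with the first rung of ladder 0, which closes the double ray there. *)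
lemma max_forest_minus_no_extension:
  assumes "0 < n" "d \<le> n" "X \<subseteq> first_rungs d \<union> initial_rail k" "card X = Suc k"
  shows "\<not> acm_indep n ((max_forest n d - first_rungs d - initial_rail k) \<union> X)" (is "\<not> acm_indep n ?T")
proof
  assume indep: "acm_indep n ?T"
  have no_double_ray: "\<not> double_ray j \<subseteq> ?T" if "j < n" for j
    using indep alg_cycle_double_ray[OF that] unfolding acm_indep_def by blast
  have X_sub: "X \<subseteq> insert (0, 0, Rung) (initial_rail k)"
  proof
    fix e assume "e \<in> X"
    then consider j where "e = (j, 0, Rung)" "0 < j" "j < d" | "e = (0, 0, Rung)" | "e \<in> initial_rail k"
      using assms(3) unfolding first_rungs_def by blast
    then show "e \<in> insert (0, 0, Rung) (initial_rail k)"
    proof cases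
      case 1
      have "double_ray j \<subseteq> ?T"
        using 1 \<open>e \<in> X\<close> assms(2) unfolding initial_rail_def first_rungs_def by auto
      then show ?thesis using no_double_ray 1 assms(2) by auto
    qed auto
  qed
  have "(0, 0, Rung) \<notin> initial_rail k" unfolding initial_rail_def by auto
  then have "card X = card (insert (0, 0, Rung) (initial_rail k))"
    using finite_initial_rail card_initial_rail assms(4) by simp
  then have X_eq: "X = insert (0, 0, Rung) (initial_rail k)"
    using card_subset_eq[OF _ X_sub] finite_initial_rail by simp
  then have "0 < d" using assms(3) unfolding initial_rail_def first_rungs_def by auto
  then have "double_ray 0 \<subseteq> ?T"
    using assms(1) unfolding X_eq initial_rail_def first_rungs_def by auto
  then show False using no_double_ray assms(1) by blast
qed

lemma is_base_trunc_max_forest_minus: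
  assumes "0 < n" "d \<le> n"
  shows "is_base (trunc_indep (acm_indep n) k) (max_forest n d - first_rungs d - initial_rail k)"
proof (rule acm.is_base_trunc_indep_if_no_extension_in_base[OF is_base_fin_max_forest])
  show "max_forest n d - first_rungs d - initial_rail k \<subseteq> max_forest n d" by blast
  show "trunc_indep (acm_indep n) k (max_forest n d - first_rungs d - initial_rail k)"
    by (rule trunc_indep_max_forest_minus[OF assms(1)])
  fix X assume "X \<subseteq> max_forest n d - (max_forest n d - first_rungs d - initial_rail k)" "card X = Suc k"
  then show "\<not> acm_indep n ((max_forest n d - first_rungs d - initial_rail k) \<union> X)"
    unfolding max_forest_diff[OF assms] by (rule max_forest_minus_no_extension[OF assms])
qed

lemma ecard_max_forest_diff:
  assumes "0 < n" "d \<le> n"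
  shows "ecard (max_forest n d - (max_forest n d - first_rungs d - initial_rail k)) = enat (d + k)"
proof -
  have "first_rungs d \<inter> initial_rail k = {}" unfolding first_rungs_def initial_rail_def by auto
  moreover have "finite (first_rungs d)" "card (first_rungs d) = d"
    unfolding first_rungs_def by (simp_all add: card_image inj_on_def)
  ultimately show ?thesis
    unfolding max_forest_diff[OF assms] ecard_def
    using finite_initial_rail card_initial_rail by (simp add: card_Un_disjoint)
qed

lemma Spec_trunc_acm_indep:
  assumes "0 < n"
  shows "Spec (trunc_indep (acm_indep n) k) =
    {ecard (F - S) | F S. S \<subseteq> F \<and> is_base (fin_indep (acm_indep n)) F
      \<and> is_base (trunc_indep (acm_indep n) k) S}"
  unfolding Spec_def fin_indep_trunc_acm_indep[OF assms] ..

lemma Spec_trunc_acm_indep_subset: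
  assumes "0 < n"
  shows "Spec (trunc_indep (acm_indep n) k) \<subseteq> {enat k .. enat (k + n)}"
proof
  fix x assume "x \<in> Spec (trunc_indep (acm_indep n) k)"
  then obtain F S where x: "x = ecard (F - S)" and FS: "S \<subseteq> F"
    "is_base (fin_indep (acm_indep n)) F" "is_base (trunc_indep (acm_indep n) k) S"
    unfolding Spec_trunc_acm_indep[OF assms] by blast
  have "fin_indep (acm_indep n) F" using FS(2) unfolding is_base_def by blast
  then show "x \<in> {enat k .. enat (k + n)}"
    using acm.ecard_diff_base_ge[OF FS(2,3,1)] ecard_diff_base_le_ladders[OF _ FS(3,1)] x by simp
qed

lemma enat_in_Spec_trunc_acm_indep:
  assumes "0 < n" "d \<le> n"
  shows "enat (d + k) \<in> Spec (trunc_indep (acm_indep n) k)"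
proof -
  let ?F = "max_forest n d" and ?S = "max_forest n d - first_rungs d - initial_rail k"
  have "?S \<subseteq> ?F" "is_base (fin_indep (acm_indep n)) ?F" "is_base (trunc_indep (acm_indep n) k) ?S"
    using is_base_fin_max_forest is_base_trunc_max_forest_minus[OF assms] by blast+
  moreover have "enat (d + k) = ecard (?F - ?S)" using ecard_max_forest_diff[OF assms] by simp
  ultimately show ?thesis unfolding Spec_trunc_acm_indep[OF assms(1)] by blast
qed

theorem proposition3p3p2:
  fixes n k :: nat
  assumes "n \<ge> 1"
  shows "Spec (trunc_indep (acm_indep n) k) = {enat k .. enat (k + n)}"
proof
  have "0 < n" using assms by simp
  then show "Spec (trunc_indep (acm_indep n) k) \<subseteq> {enat k .. enat (k + n)}"
    by (rule Spec_trunc_acm_indep_subset)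
  show "{enat k .. enat (k + n)} \<subseteq> Spec (trunc_indep (acm_indep n) k)"
  proof
    fix x assume "x \<in> {enat k .. enat (k + n)}"
    then obtain m where m: "x = enat m" "k \<le> m" "m \<le> k + n" by (cases x) auto
    then show "x \<in> Spec (trunc_indep (acm_indep n) k)"
      using enat_in_Spec_trunc_acm_indep[OF \<open>0 < n\<close>, of "m - k" k] by simp
  qed
qed

end
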